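(* Let $\varepsilon>0$ and let $s:\Delta_{L-1}\to2^{[L]}$ be a selection rule that is $\varepsilon$-compatible, permutation invariant, and contains the argmax. Then for every $w\in\Delta_{L-1}$ and $j\in[L]$, if $s(w)=\{j\}$ then $\mathrm{argmax}^\varepsilon(w)=\{j\}$.
   Context: $\Delta_{L-1}=\{w\in\mathbb{R}^L:w_i\ge0,\sum_iw_i=1\}$, $\|\cdot\|$ Euclidean norm. $s$ is $\varepsilon$-compatible if $\|v-w\|<\varepsilon$ implies $s(v)\cap s(w)\ne\varnothing$ for all $v,w\in\Delta_{L-1}$. $s$ is permutation invariant if for all $w\in\Delta_{L-1}$ and permutations $\sigma$ of $[L]$, with $v=(w_{\sigma(1)},\dots,w_{\sigma(L)})$, $j\in s(v)\iff\sigma(j)\in s(w)$. $s$ contains the argmax if $\{j:w_j=\max_\ell w_\ell\}\subseteq s(w)$ for all $w$. For $j\in[L]$, $R_j^\varepsilon=\{w\in\mathbb{R}^L: w_j\ge\max_{\ell\neq j}w_\ell+\varepsilon/\sqrt2\}$, and $\mathrm{argmax}^\varepsilon(w)=\{j\in[L]:\mathrm{dist}(w,R_j^\varepsilon)<\varepsilon\}$ with $\mathrm{dist}(w,R)=\inf_{u\in R}\|w-u\|$. *)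

theory Defs
  imports "HOL-Analysis.Analysis"
begin

text \<open>Coordinates are indexed by a finite type 'n, playing the role of [L] with L = CARD('n).\<close>

definition prob_simplex :: "(real ^ 'n) set" where
  "prob_simplex = {w. (\<forall>i. 0 \<le> w $ i) \<and> (\<Sum>i\<in>UNIV. w $ i) = 1}"

definition eps_compatible :: "real \<Rightarrow> (real ^ 'n \<Rightarrow> 'n set) \<Rightarrow> bool" where
  "eps_compatible \<epsilon> s \<longleftrightarrow>
     (\<forall>v\<in>prob_simplex. \<forall>w\<in>prob_simplex. norm (v - w) < \<epsilon> \<longrightarrow> s v \<inter> s w \<noteq> {})"

definition perm_invariant :: "(real ^ 'n \<Rightarrow> 'n set) \<Rightarrow> bool" where
  "perm_invariant s \<longleftrightarrow>
     (\<forall>w\<in>prob_simplex. \<forall>\<sigma>. \<sigma> permutes (UNIV :: 'n set) \<longrightarrow>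
        (\<forall>j. j \<in> s (\<chi> i. w $ \<sigma> i) \<longleftrightarrow> \<sigma> j \<in> s w))"

definition contains_argmax :: "(real ^ 'n \<Rightarrow> 'n set) \<Rightarrow> bool" where
  "contains_argmax s \<longleftrightarrow>
     (\<forall>w\<in>prob_simplex. {j. \<forall>l. w $ l \<le> w $ j} \<subseteq> s w)"

definition R_region :: "real \<Rightarrow> 'n \<Rightarrow> (real ^ 'n) set" where
  "R_region \<epsilon> j = {w. \<forall>l. l \<noteq> j \<longrightarrow> w $ l + \<epsilon> / sqrt 2 \<le> w $ j}"

definition argmax_eps :: "real \<Rightarrow> real ^ 'n \<Rightarrow> 'n set" where
  "argmax_eps \<epsilon> w = {j. infdist w (R_region \<epsilon> j) < \<epsilon>}"

end

theory Submission
  imports Defs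
begin

text \<open>
  If s w = {j}, then j is the only maximiser of w. If some other coordinate k came within
  \<epsilon>/sqrt 2 of w_j, swapping coordinates j and k would give a point of the simplex at distance
  sqrt 2 (w_j - w_k) < \<epsilon> from w whose selection is {k}, contradicting \<epsilon>-compatibility.
  Hence w \<in> R_j^\<epsilon>. Finally, for k \<noteq> j a point of R_k^\<epsilon> reverses the order of the j-th and
  k-th coordinates by at least 2\<epsilon>/sqrt 2, which costs a distance of at least \<epsilon>.
\<close>

lemma power2_norm_vec_eq_sum: "(norm (x :: real ^ 'n))\<^sup>2 = (\<Sum>i\<in>UNIV. (x $ i)\<^sup>2)"
  by (simp add: norm_vec_def L2_set_def sum_nonneg)

lemma abs_component_diff_le_norm:
  fixes x :: "real ^ 'n"
  assumes "j \<noteq> k"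
  shows "\<bar>x $ j - x $ k\<bar> \<le> sqrt 2 * norm x"
proof -
  have "(x $ j - x $ k)\<^sup>2 \<le> 2 * ((x $ j)\<^sup>2 + (x $ k)\<^sup>2)"
    using sum_squares_ge_zero[of "x $ j + x $ k" 0] by (simp add: power2_eq_square algebra_simps)
  also have "(x $ j)\<^sup>2 + (x $ k)\<^sup>2 = (\<Sum>i\<in>{j,k}. (x $ i)\<^sup>2)"
    using assms by simp
  also have "\<dots> \<le> (\<Sum>i\<in>UNIV. (x $ i)\<^sup>2)"
    by (rule sum_mono2) auto
  also have "\<dots> = (norm x)\<^sup>2"
    by (rule power2_norm_vec_eq_sum[symmetric])
  finally have "\<bar>x $ j - x $ k\<bar>\<^sup>2 \<le> (sqrt 2 * norm x)\<^sup>2"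
    by (simp add: power_mult_distrib)
  then show ?thesis
    by (rule power2_le_imp_le) simp
qed

lemma norm_swap_components_diff:
  fixes w :: "real ^ 'n"
  assumes "j \<noteq> k"
  shows "norm ((\<chi> i. w $ Transposition.transpose j k i) - w) = sqrt 2 * \<bar>w $ j - w $ k\<bar>"
proof -
  let ?v = "\<chi> i. w $ Transposition.transpose j k i"
  have "(norm (?v - w))\<^sup>2 = (\<Sum>i\<in>UNIV. ((?v - w) $ i)\<^sup>2)"
    by (rule power2_norm_vec_eq_sum)
  also have "\<dots> = (\<Sum>i\<in>{j,k}. ((?v - w) $ i)\<^sup>2)"
    by (rule sum.mono_neutral_right) auto
  also have "\<dots> = (sqrt 2 * \<bar>w $ j - w $ k\<bar>)\<^sup>2"
    using assms by (simp add: power_mult_distrib power2_commute)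
  finally show ?thesis
    by (simp add: power2_eq_iff_nonneg)
qed

lemma permute_in_prob_simplex:
  fixes w :: "real ^ 'n"
  assumes "w \<in> prob_simplex" and "\<sigma> permutes (UNIV :: 'n set)"
  shows "(\<chi> i. w $ \<sigma> i) \<in> prob_simplex"
proof -
  have "(\<Sum>i\<in>UNIV. w $ \<sigma> i) = (\<Sum>i\<in>UNIV. w $ i)"
    using sum.permute[OF assms(2), of "\<lambda>i. w $ i"] by (simp add: comp_def)
  with assms(1) show ?thesis
    unfolding prob_simplex_def by simp
qed

lemma perm_invariant_permute:
  fixes w :: "real ^ 'n"
  assumes "perm_invariant s" and "w \<in> prob_simplex" and "\<sigma> permutes (UNIV :: 'n set)"
  shows "s (\<chi> i. w $ \<sigma> i) = \<sigma> -` s w"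
  using assms unfolding perm_invariant_def by auto

lemma contains_argmax_singleton_is_max:
  fixes w :: "real ^ 'n"
  assumes "contains_argmax s" and "w \<in> prob_simplex" and "s w = {j}"
  shows "w $ k \<le> w $ j"
proof -
  obtain m where m: "\<forall>l. w $ l \<le> w $ m"
    using Max_in[of "range (\<lambda>l. w $ l)"] Max_ge[of "range (\<lambda>l. w $ l)"] by fastforce
  with assms have "m = j"
    unfolding contains_argmax_def by blast
  with m show ?thesis by blast
qed

lemma selection_singleton_in_R_region:
  fixes s :: "real ^ 'n \<Rightarrow> 'n set"
  assumes "\<epsilon> > 0" and compatible: "eps_compatible \<epsilon> s" and invariant: "perm_invariant s"
    and argmax: "contains_argmax s"
    and w: "w \<in> prob_simplex" and sw: "s w = {j}"
  shows "w \<in> R_region \<epsilon> j"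
  unfolding R_region_def
proof (intro CollectI allI impI)
  fix k
  assume "k \<noteq> j"
  show "w $ k + \<epsilon> / sqrt 2 \<le> w $ j"
  proof (rule ccontr)
    assume close: "\<not> ?thesis"
    let ?\<sigma> = "Transposition.transpose j k"
    let ?v = "\<chi> i. w $ ?\<sigma> i"
    have \<sigma>: "?\<sigma> permutes (UNIV :: 'n set)"
      by (rule permutes_swap_id) auto
    have "s ?v = ?\<sigma> -` {j}"
      using perm_invariant_permute[OF invariant w \<sigma>] sw by simp
    also have "\<dots> = {k}"
      using \<open>k \<noteq> j\<close> by (auto simp: Transposition.transpose_def split: if_splits)
    finally have sv: "s ?v = {k}" .
    have "norm (?v - w) = sqrt 2 * (w $ j - w $ k)"
      using norm_swap_components_diff[OF \<open>k \<noteq> j\<close>[symmetric], of w]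
        contains_argmax_singleton_is_max[OF argmax w sw, of k] by simp
    also have "\<dots> < \<epsilon>"
      using close by (simp add: field_simps)
    finally have "s ?v \<inter> s w \<noteq> {}"
      using compatible permute_in_prob_simplex[OF w \<sigma>] w unfolding eps_compatible_def by blast
    with sv sw \<open>k \<noteq> j\<close> show False by auto
  qed
qed

lemma dist_ge_if_R_regions_differ:
  fixes w u :: "real ^ 'n"
  assumes "j \<noteq> k" and "w \<in> R_region \<epsilon> j" and "u \<in> R_region \<epsilon> k"
  shows "\<epsilon> \<le> dist w u"
proof -
  have "sqrt 2 * \<epsilon> = 2 * (\<epsilon> / sqrt 2)"
    by (simp add: field_simps)
  also have "\<dots> \<le> (w - u) $ j - (w - u) $ k"
    using assms unfolding R_region_def by force
  also have "\<dots> \<le> sqrt 2 * dist w u"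
    using abs_component_diff_le_norm[OF assms(1), of "w - u"] by (simp add: dist_norm)
  finally show ?thesis by simp
qed

lemma argmax_eps_eq_singleton_if_in_R_region:
  fixes w :: "real ^ 'n"
  assumes "\<epsilon> > 0" and w: "w \<in> R_region \<epsilon> j"
  shows "argmax_eps \<epsilon> w = {j}"
proof (intro set_eqI iffI)
  fix k
  assume k: "k \<in> argmax_eps \<epsilon> w"
  show "k \<in> {j}"
  proof (rule ccontr)
    assume "k \<notin> {j}"
    then have "j \<noteq> k" by simp
    have "(\<chi> i. if i = k then \<epsilon> / sqrt 2 else 0) \<in> R_region \<epsilon> k"
      unfolding R_region_def by auto
    then have nonempty: "R_region \<epsilon> k \<noteq> {}" by blast
    have "\<epsilon> \<le> infdist w (R_region \<epsilon> k)"
      unfolding infdist_notempty[OF nonempty]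
      by (rule cINF_greatest[OF nonempty]) (rule dist_ge_if_R_regions_differ[OF \<open>j \<noteq> k\<close> w])
    with k show False
      unfolding argmax_eps_def by simp
  qed
next
  fix k
  assume "k \<in> {j}"
  with w \<open>\<epsilon> > 0\<close> show "k \<in> argmax_eps \<epsilon> w"
    unfolding argmax_eps_def by simp
qed

theorem proposition4:
  fixes \<epsilon> :: real and s :: "real ^ 'n \<Rightarrow> 'n set"
  assumes "\<epsilon> > 0"
    and "eps_compatible \<epsilon> s"
    and "perm_invariant s"
    and "contains_argmax s"
  shows "\<forall>w\<in>prob_simplex. \<forall>j. s w = {j} \<longrightarrow> argmax_eps \<epsilon> w = {j}"
  using assms selection_singleton_in_R_region argmax_eps_eq_singleton_if_in_R_region by blast

end
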